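(* Let $\mathbf{M}$ be a four-dimensional globally hyperbolic spacetime, $x\in\mathbf{M}$, and $n\geq1$ an integer. Suppose the renormalization polynomials of the locally covariant Wick powers satisfy $C_{2m}=(2m-1)!!\,\alpha^{m}R^{m}$ for all $m=1,\dots,n$, where $C_2=\alpha R$. Then a quasi-free Hadamard state $\omega$ on $\mathbf{M}$ is $\mathbf{T}_{2n}(x)$-thermal if and only if it is $\mathbf{T}_{2}(x)$-thermal. If moreover $n\geq 2$, then such a state has a sharp local temperature at $x$, i.e.\ the witnessing measure $\rho_x$ is a Dirac measure.
   Context: Consider the free massless conformally coupled scalar field on a globally hyperbolic spacetime $\mathbf{M}$ (signature $(-,+,+,+)$), with field equation $(-\Box+\tfrac16 R)\phi=0$, $R$ the Ricci scalar. For a Hadamard state, $:\!\phi^k\!:_h(x)$ denotes the Wick power obtained by point splitting and subtracting the Hadamard parametrix. The locally covariant Wick powers are $:\!\phi^{k}\!:_{\mathbf{M}}(x)=:\!\phi^{k}\!:_h(x)+\sum_{j=0}^{k-2}\binom{k}{j}C_{k-j}(x)\,:\!\phi^{j}\!:_h(x)$, where the $C_i$ are locally covariant polynomials with real coefficients in the metric and curvature with appropriate scaling dimension; in particular $C_2=\alpha R$ for a real constant $\alpha$. A state is quasi-free if its odd $n$-point functions vanish and its even ones are sums over pairings of products of two-point functions. In Minkowski spacetime, let $\omega_\beta$ ($\beta>0$) be the global thermal equilibrium state at inverse temperature $\beta$ of the free massless field; it satisfies $\omega_\beta(:\!\phi^{2k}\!:(0))=\frac{(2k-1)!!}{12^k\beta^{2k}}$.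 Let $\mathbf{T}_{2n}=\{\mathbf{1},:\!\phi^2\!:,\dots,:\!\phi^{2n}\!:\}$. A state $\omega$ on $\mathbf{M}$ is $\mathbf{T}_{2n}(x)$-thermal if there is a probability measure $\rho_x$ on $(0,\infty)$ with $\omega(:\!\phi^{2k}\!:_{\mathbf{M}}(x))=\int d\rho_x(\beta)\,\frac{(2k-1)!!}{12^k\beta^{2k}}$ for all $k=0,\dots,n$. It has a sharp local temperature at $x$ if $\rho_x$ is a Dirac measure. *)

theory Defs
  imports "HOL-Probability.Probability"
begin

text \<open>Odd double factorial: odd_dfact k = (2k-1)!!, with (-1)!! = 1.\<close>
definition odd_dfact :: "nat \<Rightarrow> real" where
  "odd_dfact k = (\<Prod>i<k. real (2 * i + 1))"

definition pairings :: "'a set \<Rightarrow> 'a set set set" where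
  "pairings A = {P. (\<forall>b\<in>P. b \<subseteq> A \<and> card b = 2) \<and> \<Union>P = A \<and> disjoint P}"

text \<open>Quasi-free Hadamard state, evaluated at coincident points x via Hadamard point
splitting: hw k = omega(:phi^k:_h(x)).  For a Hadamard state the two-point function minus
the Hadamard parametrix is smooth, with coincidence value w at x; the quasi-free property
(odd n-point functions vanish, even ones are sums over pairings of products of two-point
functions) then gives the expectation of the point-split, parametrix-subtracted product of
k fields as the sum over pairings of products of w.\<close>
definition quasi_free_hadamard_at :: "(nat \<Rightarrow> real) \<Rightarrow> bool" where
  "quasi_free_hadamard_at hw \<longleftrightarrow>
     (\<exists>w::real. \<forall>k. hw k = (\<Sum>P\<in>pairings {..<k}. \<Prod>b\<in>P. w))"

text \<open>Locally covariant Wick powers at x: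
  :phi^k:_M(x) = :phi^k:_h(x) + sum_{j=0}^{k-2} binom(k,j) C_{k-j}(x) :phi^j:_h(x),
  here in expectation value in the state (C i = C_i(x)).\<close>
definition cov_wick :: "(nat \<Rightarrow> real) \<Rightarrow> (nat \<Rightarrow> real) \<Rightarrow> nat \<Rightarrow> real" where
  "cov_wick C hw k = hw k + (\<Sum>j\<in>{j. j + 2 \<le> k}. real (k choose j) * C (k - j) * hw j)"

text \<open>Thermal expectation omega_beta(:phi^{2k}:(0)) = (2k-1)!!/(12^k beta^{2k}).\<close>
definition therm_moment :: "nat \<Rightarrow> real \<Rightarrow> real" where
  "therm_moment k \<beta> = odd_dfact k / (12 ^ k * \<beta> ^ (2 * k))"

text \<open>rho witnesses T_{2n}(x)-thermality of the state with values
  v j = omega(:phi^j:_M(x)): rho is a probability measure on (0,inf).\<close>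
definition thermal_witness :: "(nat \<Rightarrow> real) \<Rightarrow> nat \<Rightarrow> real measure \<Rightarrow> bool" where
  "thermal_witness v n \<rho> \<longleftrightarrow>
     prob_space \<rho> \<and> sets \<rho> = sets (borel :: real measure) \<and> measure \<rho> {0<..} = 1 \<and>
     (\<forall>k\<le>n. integrable \<rho> (therm_moment k) \<and> (\<integral>\<beta>. therm_moment k \<beta> \<partial>\<rho>) = v (2 * k))"

definition T_thermal :: "(nat \<Rightarrow> real) \<Rightarrow> nat \<Rightarrow> bool" where
  "T_thermal v n \<longleftrightarrow> (\<exists>\<rho>. thermal_witness v n \<rho>)"

definition is_dirac_pos :: "real measure \<Rightarrow> bool" where
  "is_dirac_pos \<rho> \<longleftrightarrow> (\<exists>\<beta>0>0. \<rho> = return borel \<beta>0)"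

end

theory Submission
  imports Defs
begin

text \<open>For a quasi-free Hadamard state the Hadamard-normal-ordered powers are the moments of a
centred Gaussian, omega(:phi^2k:_h(x)) = (2k-1)!! w^k, because 2k points have (2k-1)!! pairings.
If C_2m = (2m-1)!! (alpha R)^m, the renormalisation is itself Gaussian, and the identity
(2k choose 2i) (2k-2i-1)!! (2i-1)!! = (2k-1)!! (k choose i) turns omega(:phi^2k:_M(x)) into
(2k-1)!! u^k with u = w + alpha R. These are exactly the thermal values at the single inverse
temperature beta = 1/sqrt(12u), so T_2-thermality, which forces u > 0, already gives
T_2n-thermality via a Dirac measure. Conversely, for n >= 2 the fourth moment says that
X(beta) = 1/(12 beta^2) satisfies E[X^2] = (E X)^2, so X has variance zero and rho is a Dirac
measure.\<close>

lemma card_eq_twice_card_pairing: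
  assumes "P \<in> pairings A" "finite A"
  shows "card A = 2 * card P"
proof -
  have blocks: "\<forall>b\<in>P. b \<subseteq> A \<and> card b = 2" "\<Union>P = A" "disjoint P"
    using assms(1) unfolding pairings_def by auto
  have "finite P" using blocks(2) assms(2) by (simp add: finite_UnionD)
  have "card A = (\<Sum>b\<in>P. card b)"
    using card_Union_disjoint[OF blocks(3)] blocks \<open>finite P\<close> assms(2)
    by (metis finite_subset)
  also have "\<dots> = 2 * card P" using blocks(1) by simp
  finally show ?thesis .
qed

lemma pairings_empty: "pairings {} = {{}}"
  unfolding pairings_def by auto

lemma finite_pairings: "finite A \<Longrightarrow> finite (pairings A)"
  by (rule finite_subset[of _ "Pow (Pow A)"]) (auto simp: pairings_def)

lemma pairings_eq_UN_insert:
  assumes "a \<in> A"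
  shows "pairings A = (\<Union>b\<in>A - {a}. insert {a, b} ` pairings (A - {a, b}))"
proof
  show "pairings A \<subseteq> (\<Union>b\<in>A - {a}. insert {a, b} ` pairings (A - {a, b}))"
  proof
    fix P assume "P \<in> pairings A"
    then have blocks: "\<forall>b\<in>P. b \<subseteq> A \<and> card b = 2" "\<Union>P = A" "disjoint P"
      unfolding pairings_def by auto
    obtain b0 where b0: "b0 \<in> P" "a \<in> b0" using blocks(2) assms by auto
    obtain x y where "b0 = {x, y}" "x \<noteq> y" using blocks(1) b0(1) card_2_iff by metis
    then obtain b where b: "b0 = {a, b}" "b \<noteq> a" using b0(2) by auto
    have "\<forall>c\<in>P - {b0}. c \<inter> b0 = {}"
      using blocks(3) b0(1) unfolding pairwise_def disjnt_def by auto
    then have "P - {b0} \<in> pairings (A - {a, b})"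
      using blocks b unfolding pairings_def by (auto simp: pairwise_def)
    moreover have "P = insert {a, b} (P - {b0})" using b0 b by auto
    moreover have "b \<in> A - {a}" using b blocks(1) b0(1) by auto
    ultimately show "P \<in> (\<Union>b\<in>A - {a}. insert {a, b} ` pairings (A - {a, b}))"
      by blast
  qed
next
  show "(\<Union>b\<in>A - {a}. insert {a, b} ` pairings (A - {a, b})) \<subseteq> pairings A"
  proof
    fix P assume "P \<in> (\<Union>b\<in>A - {a}. insert {a, b} ` pairings (A - {a, b}))"
    then obtain b Q where b: "b \<in> A" "b \<noteq> a" and P: "P = insert {a, b} Q"
      and "Q \<in> pairings (A - {a, b})" by auto
    then have blocks: "\<forall>c\<in>Q. c \<subseteq> A - {a, b} \<and> card c = 2" "\<Union>Q = A - {a, b}" "disjoint Q"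
      unfolding pairings_def by auto
    have "disjoint (insert {a, b} Q)"
      unfolding pairwise_insert using blocks(1,3) by (auto simp: disjnt_def)
    then show "P \<in> pairings A"
      using blocks(1,2) b assms unfolding pairings_def P by auto
  qed
qed

lemma card_pairings_recurrence:
  assumes "finite A" "a \<in> A"
  shows "card (pairings A) = (\<Sum>b\<in>A - {a}. card (pairings (A - {a, b})))"
proof -
  have disjoint: "disjoint_family_on (\<lambda>b. insert {a, b} ` pairings (A - {a, b})) (A - {a})"
    unfolding disjoint_family_on_def
  proof (intro ballI impI)
    fix b c assume bc: "b \<in> A - {a}" "c \<in> A - {a}" "b \<noteq> c"
    show "insert {a, b} ` pairings (A - {a, b}) \<inter> insert {a, c} ` pairings (A - {a, c}) = {}"
    proof (rule ccontr)
      assume "\<not> ?thesis"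
      then obtain Q1 Q2 where Q2: "Q2 \<in> pairings (A - {a, c})"
        and eq: "insert {a, b} Q1 = insert {a, c} Q2" by auto
      have "{a, b} \<noteq> {a, c}" using bc by (metis doubleton_eq_iff)
      then have "{a, b} \<in> Q2" using eq by (metis insertI1 insertE)
      then show False using Q2 unfolding pairings_def by auto
    qed
  qed
  have inj: "inj_on (insert {a, b}) (pairings (A - {a, b}))" for b
  proof -
    have "{a, b} \<notin> Q" if "Q \<in> pairings (A - {a, b})" for Q
      using that unfolding pairings_def by auto
    then show ?thesis unfolding inj_on_def by (metis insert_ident)
  qed
  have "card (pairings A) = (\<Sum>b\<in>A - {a}. card (insert {a, b} ` pairings (A - {a, b})))"
    unfolding pairings_eq_UN_insert[OF assms(2)]
    by (rule card_UN_disjoint'[OF disjoint]) (use assms in \<open>auto intro: finite_pairings\<close>)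
  then show ?thesis by (simp add: card_image[OF inj])
qed

lemma pairings_odd_card: "finite A \<Longrightarrow> odd (card A) \<Longrightarrow> pairings A = {}"
  using card_eq_twice_card_pairing by fastforce

lemma card_pairings: "finite A \<Longrightarrow> card A = 2 * m \<Longrightarrow> real (card (pairings A)) = odd_dfact m"
proof (induction m arbitrary: A)
  case 0
  then show ?case by (simp add: pairings_empty odd_dfact_def)
next
  case (Suc m)
  then obtain a where a: "a \<in> A" by fastforce
  have "card (pairings (A - {a, b})) = odd_dfact m" if "b \<in> A - {a}" for b
  proof -
    have "card {a, b} = 2" using that by auto
    then have "card (A - {a, b}) = 2 * m" using Suc.prems that a by (simp add: card_Diff_subset)
    then show ?thesis using Suc.IH Suc.prems(1) by simp
  qed
  then have "real (card (pairings A)) = (\<Sum>b\<in>A - {a}. odd_dfact m)"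
    unfolding card_pairings_recurrence[OF Suc.prems(1) a] of_nat_sum by simp
  also have "\<dots> = odd_dfact (Suc m)"
    using Suc.prems a by (simp add: odd_dfact_def)
  finally show ?case .
qed

definition gaussian_moment :: "real \<Rightarrow> nat \<Rightarrow> real" where
  "gaussian_moment w k = (if even k then odd_dfact (k div 2) * w ^ (k div 2) else 0)"

lemma sum_pairings_prod_const: "(\<Sum>P\<in>pairings {..<k}. \<Prod>b\<in>P. w) = gaussian_moment w k"
proof -
  have "(\<Prod>b\<in>P. w) = w ^ (k div 2)" if "P \<in> pairings {..<k}" for P
    using card_eq_twice_card_pairing[OF that] by simp
  then have "(\<Sum>P\<in>pairings {..<k}. \<Prod>b\<in>P. w) = real (card (pairings {..<k})) * w ^ (k div 2)"
    by simp
  then show ?thesis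
    unfolding gaussian_moment_def
    by (auto simp: pairings_odd_card card_pairings elim!: evenE)
qed

lemma quasi_free_hadamard_at_iff: "quasi_free_hadamard_at hw \<longleftrightarrow> (\<exists>w. hw = gaussian_moment w)"
  unfolding quasi_free_hadamard_at_def sum_pairings_prod_const by auto

lemma odd_dfact_Suc: "odd_dfact (Suc m) = odd_dfact m * (2 * m + 1)"
  by (simp add: odd_dfact_def)

lemma odd_dfact_eq_fact: "odd_dfact m = fact (2 * m) / (2 ^ m * fact m)"
proof -
  have "odd_dfact m * 2 ^ m * fact m = fact (2 * m)"
  proof (induction m)
    case (Suc m)
    have "fact (2 * Suc m) = (fact (2 * m) :: real) * (2 * m + 1) * (2 * m + 2)"
      by (simp add: algebra_simps)
    moreover have "odd_dfact (Suc m) * 2 ^ Suc m * fact (Suc m)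
        = (odd_dfact m * 2 ^ m * fact m) * (2 * m + 1) * (2 * m + 2)"
      by (simp add: odd_dfact_Suc algebra_simps)
    ultimately show ?case using Suc by simp
  qed (simp add: odd_dfact_def)
  then show ?thesis by (simp add: field_simps)
qed

lemma choose_double_odd_dfact:
  assumes "i \<le> k"
  shows "real ((2 * k) choose (2 * i)) * odd_dfact (k - i) * odd_dfact i
       = odd_dfact k * real (k choose i)"
proof -
  have "2 * k - 2 * i = 2 * (k - i)" by simp
  moreover have "(2::real) ^ k = 2 ^ (k - i) * 2 ^ i" using assms by (simp flip: power_add)
  ultimately show ?thesis
    using assms
    unfolding binomial_fact[OF assms] binomial_fact[of "2 * i" "2 * k", simplified, OF assms]
      odd_dfact_eq_fact
    by (simp add: field_simps)
qed

lemma sum_even_indices: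
  fixes f :: "nat \<Rightarrow> 'a::comm_monoid_add"
  assumes "\<And>j. odd j \<Longrightarrow> f j = 0"
  shows "(\<Sum>j\<in>{j. j + 2 \<le> 2 * k}. f j) = (\<Sum>i<k. f (2 * i))"
proof -
  have "(\<Sum>j\<in>{j. j + 2 \<le> 2 * k}. f j) = (\<Sum>j\<in>(\<lambda>i. 2 * i) ` {..<k}. f j)"
  proof (rule sum.mono_neutral_right)
    show "finite {j. j + 2 \<le> 2 * k}" by (rule finite_subset[of _ "{..2 * k}"]) auto
    have "odd j" if "j + 2 \<le> 2 * k" "j \<notin> (\<lambda>i. 2 * i) ` {..<k}" for j
      using that by (auto elim!: evenE)
    then show "\<forall>j\<in>{j. j + 2 \<le> 2 * k} - (\<lambda>i. 2 * i) ` {..<k}. f j = 0"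
      using assms by blast
  qed auto
  also have "\<dots> = (\<Sum>i<k. f (2 * i))"
    by (subst sum.reindex) (auto simp: inj_on_def)
  finally show ?thesis .
qed

lemma cov_wick_gaussian_moment:
  assumes C_even: "\<forall>m\<in>{1..n}. C (2 * m) = odd_dfact m * c ^ m" and "k \<le> n"
  shows "cov_wick C (gaussian_moment w) (2 * k) = odd_dfact k * (w + c) ^ k"
proof -
  have summand: "real ((2 * k) choose (2 * i)) * C (2 * k - 2 * i) * (odd_dfact i * w ^ i)
      = odd_dfact k * (real (k choose i) * w ^ i * c ^ (k - i))" if "i < k" for i
  proof -
    have "k - i \<in> {1..n}" using \<open>k \<le> n\<close> that by auto
    then have "C (2 * k - 2 * i) = odd_dfact (k - i) * c ^ (k - i)"
      using C_even by (simp flip: diff_mult_distrib2)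
    then show ?thesis
      using choose_double_odd_dfact[of i k] that
      by (simp add: algebra_simps)
  qed
  have "cov_wick C (gaussian_moment w) (2 * k)
      = odd_dfact k * w ^ k + (\<Sum>i<k. odd_dfact k * (real (k choose i) * w ^ i * c ^ (k - i)))"
    unfolding cov_wick_def
    by (subst sum_even_indices) (simp_all add: gaussian_moment_def summand)
  also have "\<dots> = odd_dfact k * (\<Sum>i\<le>k. real (k choose i) * w ^ i * c ^ (k - i))"
    by (simp add: lessThan_Suc_atMost[symmetric] sum_distrib_left algebra_simps)
  also have "\<dots> = odd_dfact k * (w + c) ^ k" by (simp add: binomial_ring)
  finally show ?thesis .
qed

lemma therm_moment_measurable: "sets M = sets borel \<Longrightarrow> therm_moment k \<in> borel_measurable M"
proof -
  have "therm_moment k \<in> borel_measurable borel" unfolding therm_moment_def by measurable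
  then show "sets M = sets borel \<Longrightarrow> therm_moment k \<in> borel_measurable M"
    using measurable_cong_sets by blast
qed

lemma therm_moment_nonneg: "0 \<le> therm_moment k \<beta>"
proof -
  have "0 \<le> odd_dfact k" unfolding odd_dfact_def by (rule prod_nonneg) auto
  then show ?thesis unfolding therm_moment_def by (simp add: power_mult)
qed

lemma therm_moment_2: "therm_moment 2 \<beta> = 3 * (therm_moment 1 \<beta>)\<^sup>2"
  by (simp add: therm_moment_def odd_dfact_def power2_eq_square numeral_eq_Suc field_simps)

lemma therm_moment_inverse_temperature:
  assumes "u > 0"
  shows "therm_moment k (1 / sqrt (12 * u)) = odd_dfact k * u ^ k"
proof -
  have "12 ^ k * (1 / sqrt (12 * u)) ^ (2 * k) = (12 * (1 / sqrt (12 * u))\<^sup>2) ^ k"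
    by (simp add: power_mult power_mult_distrib)
  also have "\<dots> = 1 / u ^ k" using assms by (simp add: power_divide)
  finally show ?thesis unfolding therm_moment_def by simp
qed

lemma eq_inverse_temperature_if_therm_moment_1:
  assumes "\<beta> > 0" "therm_moment 1 \<beta> = u"
  shows "\<beta> = 1 / sqrt (12 * u)"
proof -
  have "u = 1 / (12 * \<beta>\<^sup>2)" using assms(2) by (simp add: therm_moment_def odd_dfact_def)
  then have "\<beta>\<^sup>2 = 1 / (12 * u)" by simp
  then show ?thesis
    using assms(1) by (metis abs_of_pos real_sqrt_abs real_sqrt_divide real_sqrt_one)
qed

lemma (in prob_space) AE_eq_expectation_if_second_moment:
  fixes X :: "'a \<Rightarrow> real"
  assumes "integrable M X" "integrable M (\<lambda>x. (X x)\<^sup>2)"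
    and "expectation (\<lambda>x. (X x)\<^sup>2) = (expectation X)\<^sup>2"
  shows "AE x in M. X x = expectation X"
proof -
  have "variance X = 0" using variance_eq assms by simp
  moreover have "integrable M (\<lambda>x. (X x - expectation X)\<^sup>2)"
    using assms(1,2) by (simp add: power2_diff)
  ultimately have "AE x in M. (X x - expectation X)\<^sup>2 = 0"
    by (simp add: integral_nonneg_eq_0_iff_AE)
  then show ?thesis by simp
qed

lemma thermal_witness_AE_pos:
  assumes "thermal_witness v n \<rho>"
  shows "AE \<beta> in \<rho>. \<beta> > 0"
proof -
  interpret prob_space \<rho> using assms unfolding thermal_witness_def by blast
  show ?thesis
    using assms AE_prob_1[of "{0<..}"] unfolding thermal_witness_def by simp
qed

lemma thermal_witness_moment_2_pos:
  assumes W: "thermal_witness v n \<rho>" and "n \<ge> 1"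
  shows "v 2 > 0"
proof -
  interpret prob_space \<rho> using W unfolding thermal_witness_def by blast
  have "integrable \<rho> (therm_moment 1)" "v 2 = expectation (therm_moment 1)"
    using W \<open>n \<ge> 1\<close> unfolding thermal_witness_def by auto
  moreover have "AE \<beta> in \<rho>. 0 < therm_moment 1 \<beta>"
    using thermal_witness_AE_pos[OF W] by eventually_elim (simp add: therm_moment_def odd_dfact_def)
  ultimately show ?thesis
    using integral_less_AE_space[of "\<lambda>_. 0" "therm_moment 1"] by (simp add: emeasure_space_1)
qed

lemma thermal_witness_return:
  assumes "b > 0" and "\<And>k. k \<le> n \<Longrightarrow> v (2 * k) = therm_moment k b"
  shows "thermal_witness v n (return borel b)"
proof -
  interpret prob_space "return borel b" by (simp add: prob_space_return)
  have "integrable (return borel b) (therm_moment k)" for k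
  proof (rule integrable_const_bound[where B = "therm_moment k b"])
    have "Measurable.pred borel (\<lambda>\<beta>. therm_moment k \<beta> \<le> therm_moment k b)"
      using therm_moment_measurable[of borel k] by measurable
    then show "AE \<beta> in return borel b. norm (therm_moment k \<beta>) \<le> therm_moment k b"
      by (simp add: AE_return therm_moment_nonneg)
  qed (simp add: therm_moment_measurable)
  then show ?thesis
    using assms unfolding thermal_witness_def
    by (simp add: prob_space_return measure_return integral_return therm_moment_measurable)
qed

lemma T_thermal_gaussian_iff:
  assumes "n \<ge> 1" and V: "\<And>k. k \<le> n \<Longrightarrow> v (2 * k) = odd_dfact k * u ^ k"
  shows "T_thermal v n \<longleftrightarrow> u > 0"
proof
  assume "T_thermal v n"
  then obtain \<rho> where "thermal_witness v n \<rho>" unfolding T_thermal_def by blast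
  moreover have "v 2 = u" using V[of 1] \<open>n \<ge> 1\<close> by (simp add: odd_dfact_def)
  ultimately show "u > 0" using thermal_witness_moment_2_pos \<open>n \<ge> 1\<close> by fastforce
next
  assume "u > 0"
  then have "thermal_witness v n (return borel (1 / sqrt (12 * u)))"
    by (intro thermal_witness_return) (simp_all add: V therm_moment_inverse_temperature)
  then show "T_thermal v n" unfolding T_thermal_def by blast
qed

lemma thermal_witness_gaussian_eq_return:
  assumes W: "thermal_witness v n \<rho>" and "n \<ge> 2"
    and V: "\<And>k. k \<le> n \<Longrightarrow> v (2 * k) = odd_dfact k * u ^ k"
  shows "\<rho> = return borel (1 / sqrt (12 * u))"
proof -
  interpret prob_space \<rho> using W unfolding thermal_witness_def by blast
  have sets: "sets \<rho> = sets borel"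
    and I1: "integrable \<rho> (therm_moment 1)" and E1: "expectation (therm_moment 1) = v 2"
    and I2: "integrable \<rho> (therm_moment 2)" and E2: "expectation (therm_moment 2) = v 4"
    using W \<open>n \<ge> 2\<close> unfolding thermal_witness_def by (auto dest: spec[of _ 1] spec[of _ 2])
  have "v 2 = u" "v 4 = 3 * u\<^sup>2"
    using V[of 1] V[of 2] \<open>n \<ge> 2\<close> by (simp_all add: odd_dfact_def numeral_eq_Suc)
  moreover have square: "(\<lambda>\<beta>. (therm_moment 1 \<beta>)\<^sup>2) = (\<lambda>\<beta>. therm_moment 2 \<beta> / 3)"
    by (simp add: therm_moment_2)
  then have "integrable \<rho> (\<lambda>\<beta>. (therm_moment 1 \<beta>)\<^sup>2)"
    using I2 by simp
  moreover have "expectation (\<lambda>\<beta>. (therm_moment 1 \<beta>)\<^sup>2) = expectation (therm_moment 2) / 3"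
    unfolding square by simp
  ultimately have "AE \<beta> in \<rho>. therm_moment 1 \<beta> = u"
    using AE_eq_expectation_if_second_moment[OF I1] E1 E2 by simp
  with thermal_witness_AE_pos[OF W] have "AE \<beta> in \<rho>. \<beta> = 1 / sqrt (12 * u)"
    by eventually_elim (rule eq_inverse_temperature_if_therm_moment_1)
  then show ?thesis using AE_eq_constD(1) return_cong[OF sets] by metis
qed

theorem corollary1:
  fixes n :: nat and \<alpha> R :: real and C hw :: "nat \<Rightarrow> real"
  assumes n_ge: "n \<ge> 1"
    and C2: "C 2 = \<alpha> * R"
    and C_even: "\<forall>m\<in>{1..n}. C (2 * m) = odd_dfact m * \<alpha> ^ m * R ^ m"
    and qf: "quasi_free_hadamard_at hw"
  shows "(T_thermal (cov_wick C hw) n \<longleftrightarrow> T_thermal (cov_wick C hw) 1)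
         \<and> (n \<ge> 2 \<longrightarrow> (\<forall>\<rho>. thermal_witness (cov_wick C hw) n \<rho> \<longrightarrow> is_dirac_pos \<rho>))"
proof -
  \<comment> \<open>C2 is the case m = 1 of C_even and is not needed separately.\<close>
  obtain w where hw: "hw = gaussian_moment w" using qf quasi_free_hadamard_at_iff by blast
  define u where "u = w + \<alpha> * R"
  have V: "cov_wick C hw (2 * k) = odd_dfact k * u ^ k" if "k \<le> n" for k
    using cov_wick_gaussian_moment[of n C "\<alpha> * R"] C_even that
    unfolding hw u_def by (simp add: power_mult_distrib mult.assoc)
  have thermal_iff: "T_thermal (cov_wick C hw) m \<longleftrightarrow> u > 0" if "1 \<le> m" "m \<le> n" for m
    using T_thermal_gaussian_iff[of m] V that by simp
  have "is_dirac_pos \<rho>" if "n \<ge> 2" "thermal_witness (cov_wick C hw) n \<rho>" for \<rho>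
  proof -
    have "u > 0" using thermal_iff[OF n_ge order_refl] that(2) unfolding T_thermal_def by blast
    then have "1 / sqrt (12 * u) > 0" by simp
    moreover have "\<rho> = return borel (1 / sqrt (12 * u))"
      by (rule thermal_witness_gaussian_eq_return[OF that(2,1)]) (rule V)
    ultimately show ?thesis unfolding is_dirac_pos_def by blast
  qed
  then show ?thesis using thermal_iff n_ge by auto
qed

end
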